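(* For every positive integer $t$ and every $c\in(0,1)$ there exists $\delta=\delta(t,c)\in(0,1)$ such that for all $n>c\delta^{-1}$ the following holds. Let $V$ be a set of $n$ vertices and let $G_R$ and $G_B$ be graphs on vertex set $V$. If $G_R$ has at most $\delta n^2$ edges and $G_B$ has at least $cn^2$ edges, then there exists a set $S\subseteq V$ with $|S|\geq t$ such that $G_B[S]$ has at least $\frac{c}{2}|S|^2$ edges and $G_R[S]$ has no edges. *)

theory Defs
  imports Main Complex_Main
begin

definition graph_on :: "'a set \<Rightarrow> 'a set set \<Rightarrow> bool" where
  "graph_on V E \<longleftrightarrow> (\<forall>e\<in>E. e \<subseteq> V \<and> card e = 2)"

definition induced_edges :: "'a set set \<Rightarrow> 'a set \<Rightarrow> 'a set set" where
  "induced_edges E S = {e \<in> E. e \<subseteq> S}"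

end

theory Submission
  imports Defs
begin

text \<open>Average over the vertex sets \<open>S\<close> of size \<open>s = t + 2\<close>.  Each edge lies in exactly
  \<open>(n - 2 choose s - 2)\<close> of them, so summing over all \<open>S\<close> recovers the global edge counts up
  to a common factor.  Bound the blue edges of \<open>S\<close> by less than \<open>c s\<^sup>2 / 2\<close> if \<open>S\<close> is red-free
  and by \<open>s choose 2\<close> times its number of red edges otherwise.  If no red-free \<open>S\<close> were dense,
  the blue edges would number at most
  \<open>(c s\<^sup>2 / 2) (n choose 2) / (s choose 2) + (s choose 2) |G\<^sub>R|\<close>, which for \<open>\<delta> = c / (4 s\<^sup>2)\<close>
  and \<open>s \<ge> 3\<close> is less than \<open>c n\<^sup>2\<close>.\<close>

lemma of_nat_choose_two: "real (n choose 2) = real n * (real n - 1) / 2"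
  by (simp add: binomial_gbinomial gbinomial_prod_rev numeral_2_eq_2 algebra_simps)

lemma card_supersets_of_card:
  assumes "finite V" "e \<subseteq> V" "card e \<le> s"
  shows "card {S. S \<subseteq> V \<and> card S = s \<and> e \<subseteq> S} = (card V - card e) choose (s - card e)"
proof -
  have "finite e"
    using assms(1,2) finite_subset by blast
  have "bij_betw (\<lambda>S. S - e) {S. S \<subseteq> V \<and> card S = s \<and> e \<subseteq> S}
          {T. T \<subseteq> V - e \<and> card T = s - card e}"
  proof (rule bij_betw_byWitness[where f' = "\<lambda>T. T \<union> e"])
    have "card (T \<union> e) = card T + card e" if "T \<subseteq> V - e" for T
      using that assms(1) \<open>finite e\<close> by (subst card_Un_disjoint) (auto intro: finite_subset)
    then show "(\<lambda>T. T \<union> e) ` {T. T \<subseteq> V - e \<and> card T = s - card e}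
                 \<subseteq> {S. S \<subseteq> V \<and> card S = s \<and> e \<subseteq> S}"
      using assms by auto
  qed (use \<open>finite e\<close> in \<open>auto simp: card_Diff_subset\<close>)
  then have "card {S. S \<subseteq> V \<and> card S = s \<and> e \<subseteq> S} = card (V - e) choose (s - card e)"
    using assms(1) by (simp add: bij_betw_same_card n_subsets)
  then show ?thesis
    using assms \<open>finite e\<close> by (simp add: card_Diff_subset)
qed

lemma finite_edges: "finite V \<Longrightarrow> graph_on V E \<Longrightarrow> finite E"
  unfolding graph_on_def by (meson PowI finite_Pow_iff finite_subset subsetI)

lemma graph_on_induced_edges: "graph_on V E \<Longrightarrow> graph_on S (induced_edges E S)"
  unfolding graph_on_def induced_edges_def by auto

lemma card_edges_le_choose_two:
  assumes "finite V" "graph_on V E"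
  shows "card E \<le> card V choose 2"
proof -
  have "card E \<le> card {e. e \<subseteq> V \<and> card e = 2}"
    using assms by (intro card_mono) (auto simp: graph_on_def)
  also have "\<dots> = card V choose 2"
    using assms(1) by (simp add: n_subsets)
  finally show ?thesis .
qed

lemma sum_card_induced_edges:
  assumes "finite V" "graph_on V E" "2 \<le> s"
  shows "(\<Sum>S | S \<subseteq> V \<and> card S = s. card (induced_edges E S))
           = card E * (card V - 2 choose (s - 2))"
proof -
  let ?F = "{S. S \<subseteq> V \<and> card S = s}"
  have "(\<Sum>S\<in>?F. card (induced_edges E S)) = (\<Sum>S\<in>?F. \<Sum>e\<in>E. if e \<subseteq> S then 1 else 0)"
    using finite_edges[OF assms(1,2)] by (simp add: induced_edges_def sum.If_cases Int_def)
  also have "\<dots> = (\<Sum>e\<in>E. \<Sum>S\<in>?F. if e \<subseteq> S then 1 else 0)"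
    by (rule sum.swap)
  also have "\<dots> = (\<Sum>e\<in>E. card {S. S \<subseteq> V \<and> card S = s \<and> e \<subseteq> S})"
    using assms(1) by (simp add: sum.If_cases Int_def conj_ac)
  also have "\<dots> = (\<Sum>e\<in>E. card V - 2 choose (s - 2))"
    using assms by (intro sum.cong refl) (simp add: card_supersets_of_card graph_on_def)
  finally show ?thesis
    by simp
qed

lemma exists_red_free_subset_with_many_blue_edges:
  fixes a :: real
  assumes "finite V" and GR: "graph_on V GR" and GB: "graph_on V GB"
    and "2 \<le> s" "s \<le> card V" "0 \<le> a"
    and dense: "a * real (card V choose 2) + real (s choose 2)^2 * real (card GR)
                  < real (s choose 2) * real (card GB)"
  shows "\<exists>S \<subseteq> V. card S = s \<and> induced_edges GR S = {} \<and> a \<le> real (card (induced_edges GB S))"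
proof (rule ccontr)
  assume no_good_set: "\<not> ?thesis"
  define F where "F = {S. S \<subseteq> V \<and> card S = s}"
  define K where "K = real (card V - 2 choose (s - 2))"
  define m where "m = real (s choose 2)"
  have pointwise: "real (card (induced_edges GB S)) \<le> a + m * real (card (induced_edges GR S))"
    if "S \<in> F" for S
  proof (cases "induced_edges GR S = {}")
    case True
    then show ?thesis
      using no_good_set that \<open>0 \<le> a\<close> unfolding F_def m_def by force
  next
    case False
    have "finite S"
      using that \<open>finite V\<close> finite_subset unfolding F_def by blast
    have "finite (induced_edges GR S)"
      using finite_edges[OF \<open>finite S\<close> graph_on_induced_edges[OF GR]] .
    with False have "1 \<le> real (card (induced_edges GR S))"
      by (simp add: Suc_le_eq card_gt_0_iff)
    moreover have "real (card (induced_edges GB S)) \<le> m"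
      using card_edges_le_choose_two[OF \<open>finite S\<close> graph_on_induced_edges[OF GB]] that
      unfolding F_def m_def by simp
    moreover have "0 \<le> m"
      unfolding m_def by simp
    ultimately show ?thesis
      using \<open>0 \<le> a\<close> mult_left_mono[of 1 "real (card (induced_edges GR S))" m] by linarith
  qed
  have "real (card GB) * K = (\<Sum>S\<in>F. real (card (induced_edges GB S)))"
    using sum_card_induced_edges[OF \<open>finite V\<close> GB \<open>2 \<le> s\<close>] unfolding F_def K_def
    by (simp flip: of_nat_sum)
  also have "\<dots> \<le> (\<Sum>S\<in>F. a + m * real (card (induced_edges GR S)))"
    by (rule sum_mono) (rule pointwise)
  also have "\<dots> = a * real (card F) + m * (real (card GR) * K)"
    using sum_card_induced_edges[OF \<open>finite V\<close> GR \<open>2 \<le> s\<close>] unfolding F_def K_def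
    by (simp add: sum.distrib mult.commute flip: sum_distrib_left of_nat_sum)
  finally have counted: "real (card GB) * K \<le> a * real (card F) + m * (real (card GR) * K)" .
  have subset_of_subset: "real (card F) * m = real (card V choose 2) * K"
    using choose_mult[OF \<open>2 \<le> s\<close> \<open>s \<le> card V\<close>] \<open>finite V\<close> unfolding F_def K_def m_def
    by (simp add: n_subsets flip: of_nat_mult)
  have "(m * real (card GB)) * K \<le> m * (a * real (card F) + m * (real (card GR) * K))"
    using mult_left_mono[OF counted, of m] by (simp add: m_def mult.assoc)
  also have "\<dots> = a * (real (card F) * m) + m^2 * real (card GR) * K"
    by (simp add: algebra_simps power2_eq_square)
  also have "\<dots> = (a * real (card V choose 2) + m^2 * real (card GR)) * K"
    by (simp only: subset_of_subset) (simp add: algebra_simps)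
  finally have "(m * real (card GB)) * K \<le> (a * real (card V choose 2) + m^2 * real (card GR)) * K" .
  moreover have "0 < K"
    using \<open>2 \<le> s\<close> \<open>s \<le> card V\<close> unfolding K_def by (simp add: zero_less_binomial_iff)
  ultimately show False
    using dense unfolding m_def by (meson linorder_not_le mult_right_le_imp_le)
qed

lemma density_margin:
  fixes s n c gb gr :: real
  assumes "3 \<le> s" "0 < n" "0 < c" "c * n^2 \<le> gb" "gr \<le> c / (4 * s^2) * n^2"
  shows "c / 2 * s^2 * (n * (n - 1) / 2) + (s * (s - 1) / 2)^2 * gr < s * (s - 1) / 2 * gb"
proof -
  have "c / 2 * s^2 * (n * (n - 1) / 2) < c * n^2 * (s^2 / 4)"
    using assms by (simp add: power2_eq_square algebra_simps)
  moreover have "(s * (s - 1) / 2)^2 * gr \<le> (s * (s - 1) / 2)^2 * (c / (4 * s^2) * n^2)"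
    using assms(5) by (rule mult_left_mono) simp
  moreover have "\<dots> = c * n^2 * ((s - 1)^2 / 16)"
    using assms(1) by (simp add: field_simps power2_eq_square)
  ultimately have "c / 2 * s^2 * (n * (n - 1) / 2) + (s * (s - 1) / 2)^2 * gr
                     < c * n^2 * (s^2 / 4 + (s - 1)^2 / 16)"
    unfolding distrib_left by linarith
  also have "\<dots> \<le> c * n^2 * (s * (s - 1) / 2)"
  proof (rule mult_left_mono)
    have "0 \<le> (s - 3) * (3 * s + 3)"
      using assms(1) by simp
    then show "s^2 / 4 + (s - 1)^2 / 16 \<le> s * (s - 1) / 2"
      by (simp add: power2_eq_square field_simps)
  qed (use assms in simp)
  also have "\<dots> \<le> s * (s - 1) / 2 * gb"
    using assms(1,4) by (simp add: mult.commute mult_left_mono)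
  finally show ?thesis .
qed

lemma exists_red_free_subset_dense_in_blue:
  fixes c :: real
  assumes "finite V" "graph_on V GR" "graph_on V GB" "3 \<le> s" "s \<le> card V" "0 < c"
    and "real (card GR) \<le> c / (4 * real s^2) * real (card V)^2"
    and "c * real (card V)^2 \<le> real (card GB)"
  shows "\<exists>S \<subseteq> V. card S = s \<and> induced_edges GR S = {} \<and>
           c / 2 * real (card S)^2 \<le> real (card (induced_edges GB S))"
proof -
  have "0 < real (card V)"
    using assms(4,5) by simp
  then have "c / 2 * real s^2 * (real (card V) * (real (card V) - 1) / 2)
               + (real s * (real s - 1) / 2)^2 * real (card GR)
             < real s * (real s - 1) / 2 * real (card GB)"
    using assms(4,6-) by (intro density_margin) auto
  then have "c / 2 * real s^2 * real (card V choose 2) + real (s choose 2)^2 * real (card GR)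
               < real (s choose 2) * real (card GB)"
    by (simp only: of_nat_choose_two)
  moreover have "2 \<le> s" "0 \<le> c / 2 * real s^2"
    using assms(4,6) by auto
  ultimately show ?thesis
    using exists_red_free_subset_with_many_blue_edges[OF assms(1-3) _ assms(5)] by metis
qed

theorem lemma4p6:
  "\<forall>(t::nat) (c::real). t > 0 \<and> 0 < c \<and> c < 1 \<longrightarrow>
     (\<exists>\<delta>::real. 0 < \<delta> \<and> \<delta> < 1 \<and>
       (\<forall>(V::'a set) (GR::'a set set) (GB::'a set set).
          finite V \<and> real (card V) > c / \<delta> \<and>
          graph_on V GR \<and> graph_on V GB \<and>
          real (card GR) \<le> \<delta> * (real (card V))^2 \<and>
          real (card GB) \<ge> c * (real (card V))^2 \<longrightarrow>
          (\<exists>S \<subseteq> V. card S \<ge> t \<and>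
             real (card (induced_edges GB S)) \<ge> c / 2 * (real (card S))^2 \<and>
             induced_edges GR S = {})))"
  apply (intro allI impI)
  subgoal premises tc for t c
  proof -
    define s where "s = t + 2"
    define \<delta> where "\<delta> = c / (4 * real s^2)"
    have "3 \<le> s" "real s \<le> real s^2"
      using tc by (auto simp: s_def power2_eq_square)
    moreover have "c < 4 * real s^2"
      using calculation tc by linarith
    ultimately have "0 < \<delta>" "\<delta> < 1" "c / \<delta> = 4 * real s^2"
      using tc by (auto simp: \<delta>_def field_simps)
    show ?thesis
    proof (intro exI[of _ \<delta>] conjI \<open>0 < \<delta>\<close> \<open>\<delta> < 1\<close> allI impI, goal_cases)
      case (1 V GR GB)
      then have "s \<le> card V"
        using \<open>c / \<delta> = _\<close> \<open>real s \<le> _\<close> by linarith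
      then obtain S where "S \<subseteq> V" "card S = s" "induced_edges GR S = {}"
          "c / 2 * real (card S)^2 \<le> real (card (induced_edges GB S))"
        using exists_red_free_subset_dense_in_blue[of V GR GB s c] 1 tc \<open>3 \<le> s\<close>
        unfolding \<delta>_def by auto
      then show ?case
        by (auto simp: s_def)
    qed
  qed
  done

end
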